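(* Let $n\ge3$. There is no isomorphism preserving the structure of $\mathbb{Z}_2^n$-graded algebra between $\mathbb{O}_{0,n}$ and $\mathbb{O}_{n,0}$.
   Context: $\mathbb{Z}_2=\{0,1\}$. For $p+q=n\ge3$, $\mathbb{O}_{p,q}$ is the real algebra with basis $\{u_x: x\in\mathbb{Z}_2^n\}$ and product $u_x\cdot u_y=(-1)^{f(x,y)}u_{x+y}$, where $f(x,y)=\sum_{1\le i<j<k\le n}(x_ix_jy_k+x_iy_jx_k+y_ix_jx_k)+\sum_{1\le i\le j\le n}x_iy_j+\sum_{1\le i\le p}x_iy_i$. An isomorphism preserving the graded structure is an algebra isomorphism sending each homogeneous element (scalar multiple of some $u_x$) to a homogeneous element. *)

theory Defs
  imports Complex_Main
begin

text \<open>Elements of Z_2^n are encoded as x :: nat => bool with x i = False for i >= n;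
  coordinate i (0-based) corresponds to coordinate i+1 of the paper.
  Addition in Z_2^n is pointwise exclusive or.\<close>

definition Zn :: "nat \<Rightarrow> (nat \<Rightarrow> bool) set" where
  "Zn n = {x. \<forall>i\<ge>n. \<not> x i}"

definition zadd :: "(nat \<Rightarrow> bool) \<Rightarrow> (nat \<Rightarrow> bool) \<Rightarrow> (nat \<Rightarrow> bool)" where
  "zadd x y = (\<lambda>i. x i \<noteq> y i)"

definition bt :: "(nat \<Rightarrow> bool) \<Rightarrow> nat \<Rightarrow> nat" where
  "bt x i = (if x i then 1 else 0)"

definition twist :: "nat \<Rightarrow> nat \<Rightarrow> (nat \<Rightarrow> bool) \<Rightarrow> (nat \<Rightarrow> bool) \<Rightarrow> nat" where
  "twist p q x y =
     (\<Sum>i<p+q. \<Sum>j<p+q. \<Sum>k<p+q. if i < j \<and> j < k then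
         bt x i * bt x j * bt y k + bt x i * bt y j * bt x k + bt y i * bt x j * bt x k else 0)
   + (\<Sum>i<p+q. \<Sum>j<p+q. if i \<le> j then bt x i * bt y j else 0)
   + (\<Sum>i<p. bt x i * bt y i)"

text \<open>The real algebra O_{p,q}: elements are real coefficient functions on Z_2^n
  (vanishing outside Z_2^n), i.e. a = sum_x a(x) u_x.\<close>
definition Ocarrier :: "nat \<Rightarrow> nat \<Rightarrow> ((nat \<Rightarrow> bool) \<Rightarrow> real) set" where
  "Ocarrier p q = {a. \<forall>x. x \<notin> Zn (p+q) \<longrightarrow> a x = 0}"

definition ubasis :: "(nat \<Rightarrow> bool) \<Rightarrow> (nat \<Rightarrow> bool) \<Rightarrow> real" where
  "ubasis x = (\<lambda>z. if z = x then 1 else 0)"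

text \<open>Bilinear extension of u_x . u_y = (-1)^f(x,y) u_{x+y}.\<close>
definition Omult :: "nat \<Rightarrow> nat \<Rightarrow> ((nat \<Rightarrow> bool) \<Rightarrow> real) \<Rightarrow> ((nat \<Rightarrow> bool) \<Rightarrow> real)
    \<Rightarrow> ((nat \<Rightarrow> bool) \<Rightarrow> real)" where
  "Omult p q a b = (\<lambda>z. \<Sum>x\<in>Zn (p+q). \<Sum>y\<in>Zn (p+q).
      if zadd x y = z then (-1::real) ^ twist p q x y * a x * b y else 0)"

definition homogeneous :: "nat \<Rightarrow> nat \<Rightarrow> ((nat \<Rightarrow> bool) \<Rightarrow> real) \<Rightarrow> bool" where
  "homogeneous p q a \<longleftrightarrow> (\<exists>x\<in>Zn (p+q). \<exists>c::real. a = (\<lambda>z. c * ubasis x z))"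

definition graded_iso :: "nat \<Rightarrow> nat \<Rightarrow> nat \<Rightarrow> nat \<Rightarrow>
    (((nat \<Rightarrow> bool) \<Rightarrow> real) \<Rightarrow> ((nat \<Rightarrow> bool) \<Rightarrow> real)) \<Rightarrow> bool" where
  "graded_iso p q p' q' \<phi> \<longleftrightarrow>
     bij_betw \<phi> (Ocarrier p q) (Ocarrier p' q') \<and>
     (\<forall>a\<in>Ocarrier p q. \<forall>b\<in>Ocarrier p q. \<phi> (\<lambda>z. a z + b z) = (\<lambda>z. \<phi> a z + \<phi> b z)) \<and>
     (\<forall>a\<in>Ocarrier p q. \<forall>c::real. \<phi> (\<lambda>z. c * a z) = (\<lambda>z. c * \<phi> a z)) \<and>
     (\<forall>a\<in>Ocarrier p q. \<forall>b\<in>Ocarrier p q. \<phi> (Omult p q a b) = Omult p' q' (\<phi> a) (\<phi> b)) \<and>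
     (\<forall>a\<in>Ocarrier p q. homogeneous p q a \<longrightarrow> homogeneous p' q' (\<phi> a))"

end

theory Submission
  imports Defs
begin

text \<open>In O_{p,q} every basis element squares to \<open>u_x u_x = \<plusminus>u_0\<close>, with sign
  \<open>(-1)^f(x,x)\<close> where \<open>f(x,x) = 3 C(w,3) + C(w,2) + w + w_p\<close>, \<open>w\<close> being the weight of \<open>x\<close>
  and \<open>w_p\<close> the weight of its first \<open>p\<close> coordinates. A grading-preserving isomorphism sends
  each \<open>u_x\<close> to a nonzero multiple of some \<open>u_y\<close>, injectively in \<open>x\<close>, and preserves the sign
  of the square, so it cannot decrease the number of grades whose basis element squares to
  \<open>-u_0\<close>. For odd \<open>w\<close> the number \<open>C(w,2) + C(w,3) = C(w+1,3)\<close> is even, so every grade of odd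
  weight squares to \<open>-u_0\<close> in O_{0,n} and to \<open>+u_0\<close> in O_{n,0}. As half of the grades have odd
  weight and \<open>u_0\<close> squares to \<open>+u_0\<close>, O_{0,n} has at least \<open>2^(n-1)\<close> such grades and O_{n,0}
  fewer.\<close>

definition weight :: "(nat \<Rightarrow> bool) \<Rightarrow> nat \<Rightarrow> nat" where
  "weight x m = (\<Sum>i<m. bt x i)"

lemma bt_square: "bt x i * bt x i = bt x i"
  by (simp add: bt_def)

lemma sum_bt_times_weight_choose:
  "(\<Sum>j<m. bt x j * (weight x j choose r)) = weight x m choose Suc r"
proof (induction m)
  case 0
  show ?case by (simp add: weight_def)
next
  case (Suc m)
  then show ?case by (simp add: weight_def bt_def)
qed

lemma even_choose_three: "even (2 * s choose 3)"
proof (induction s)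
  case 0
  show ?case by (simp add: binomial_eq_0)
next
  case (Suc s)
  have "2 * Suc s choose 3 = (Suc (2 * s) choose 2) + (2 * s choose 2) + (2 * s choose 3)"
    by (simp add: numeral_3_eq_3 numeral_2_eq_2)
  also have "(Suc (2 * s) choose 2) + (2 * s choose 2) = 2 * (2 * s * s)"
    by (simp add: choose_two) (cases s; simp add: algebra_simps)
  finally show ?case using Suc by simp
qed

lemma sum_lessThan_if_less:
  fixes f :: "nat \<Rightarrow> 'a::comm_monoid_add"
  assumes "m \<le> N"
  shows "(\<Sum>i<N. if i < m then f i else 0) = (\<Sum>i<m. f i)"
proof -
  have "{i \<in> {..<N}. i < m} = {..<m}" using assms by auto
  then show ?thesis by (simp add: sum.inter_filter[symmetric])
qed

lemma sum_strict_upper_triangle: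
  fixes f :: "nat \<Rightarrow> nat \<Rightarrow> 'a::comm_monoid_add"
  shows "(\<Sum>i<N. \<Sum>j<N. if i < j then f i j else 0) = (\<Sum>j<N. \<Sum>i<j. f i j)"
  by (subst sum.swap) (rule sum.cong[OF refl], rule sum_lessThan_if_less, simp)

lemma sum_upper_triangle_bits:
  "(\<Sum>i<N. \<Sum>j<N. if i \<le> j then bt x i * bt x j else 0) =
    (weight x N choose 2) + weight x N"
proof -
  have "(\<Sum>i<N. \<Sum>j<N. if i \<le> j then bt x i * bt x j else 0)
      = (\<Sum>i<N. \<Sum>j<N. (if i < j then bt x i * bt x j else 0) + (if i = j then bt x i else 0))"
    by (intro sum.cong refl) (auto simp: bt_square)
  also have "\<dots> = (\<Sum>j<N. bt x j * (weight x j choose 1)) + weight x N"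
    by (simp add: sum.distrib sum_strict_upper_triangle weight_def sum_distrib_left mult.commute)
  finally show ?thesis
    using sum_bt_times_weight_choose[where m = N and r = 1] by (simp add: numeral_2_eq_2)
qed

lemma sum_strict_triple_upper:
  fixes g :: "nat \<Rightarrow> nat \<Rightarrow> nat \<Rightarrow> 'a::comm_monoid_add"
  shows "(\<Sum>i<N. \<Sum>j<N. \<Sum>k<N. if i < j \<and> j < k then g i j k else 0) =
    (\<Sum>k<N. \<Sum>j<k. \<Sum>i<j. g i j k)"
proof -
  have "(\<Sum>i<N. \<Sum>j<N. \<Sum>k<N. if i < j \<and> j < k then g i j k else 0)
      = (\<Sum>i<N. \<Sum>j<N. if i < j then (\<Sum>k<N. if j < k then g i j k else 0) else 0)"
    by (intro sum.cong refl) auto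
  also have "\<dots> = (\<Sum>j<N. \<Sum>k<N. \<Sum>i<j. if j < k then g i j k else 0)"
    by (simp add: sum_strict_upper_triangle) (intro sum.cong refl sum.swap)
  also have "\<dots> = (\<Sum>j<N. \<Sum>k<N. if j < k then (\<Sum>i<j. g i j k) else 0)"
    by (intro sum.cong refl) simp
  also have "\<dots> = (\<Sum>k<N. \<Sum>j<k. \<Sum>i<j. g i j k)"
    by (rule sum_strict_upper_triangle)
  finally show ?thesis .
qed

lemma sum_strict_triple_bits:
  "(\<Sum>k<N. \<Sum>j<k. \<Sum>i<j. bt x i * bt x j * bt x k) = weight x N choose 3"
proof -
  have "(\<Sum>k<N. \<Sum>j<k. \<Sum>i<j. bt x i * bt x j * bt x k)
      = (\<Sum>k<N. bt x k * (\<Sum>j<k. bt x j * (weight x j choose 1)))"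
    by (simp add: weight_def sum_distrib_left sum_distrib_right mult_ac)
  also have "\<dots> = (\<Sum>k<N. bt x k * (weight x k choose Suc 1))"
    by (simp only: sum_bt_times_weight_choose)
  also have "\<dots> = weight x N choose Suc (Suc 1)"
    by (rule sum_bt_times_weight_choose)
  finally show ?thesis by (simp add: numeral_3_eq_3)
qed

lemma twist_diag:
  "twist p q x x = 3 * (weight x (p + q) choose 3) + (weight x (p + q) choose 2)
     + weight x (p + q) + weight x p"
  unfolding twist_def sum_strict_triple_upper sum_upper_triangle_bits
  by (simp add: bt_square weight_def sum.distrib
      sum_strict_triple_bits[unfolded weight_def, symmetric])

lemma twist_diag_parity:
  assumes "odd (weight x n)"
  shows "odd (twist 0 n x x)" and "even (twist n 0 x x)"
proof -
  let ?w = "weight x n"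
  obtain s where "Suc ?w = 2 * s" using assms by (metis even_Suc evenE)
  then have "(?w choose 2) + (?w choose 3) = 2 * s choose 3"
    by (metis binomial_Suc_Suc numeral_2_eq_2 numeral_3_eq_3)
  then have "even ((?w choose 2) + (?w choose 3))"
    using even_choose_three by simp
  then have "even (3 * (?w choose 3) + (?w choose 2))"
    by presburger
  with assms show "odd (twist 0 n x x)" "even (twist n 0 x x)"
    by (simp_all add: twist_diag weight_def)
qed

definition zero_grade :: "nat \<Rightarrow> bool" where
  "zero_grade = (\<lambda>_. False)"

lemma finite_Zn: "finite (Zn n)"
proof (rule finite_subset)
  show "Zn n \<subseteq> (\<lambda>S i. i \<in> S) ` Pow {..<n}"
  proof
    fix x assume "x \<in> Zn n"
    then have "x = (\<lambda>i. i \<in> {i. i < n \<and> x i})" by (auto simp: Zn_def) (metis not_le)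
    then show "x \<in> (\<lambda>S i. i \<in> S) ` Pow {..<n}" by blast
  qed
qed simp

lemma zero_grade_in_Zn: "zero_grade \<in> Zn n"
  by (simp add: Zn_def zero_grade_def)

lemma zadd_self: "zadd x x = zero_grade"
  by (simp add: zadd_def zero_grade_def)

lemma twist_zero_grade_left: "twist p q zero_grade y = 0"
  by (simp add: twist_def bt_def zero_grade_def)

lemma twist_zero_grade_right: "twist p q x zero_grade = 0"
  by (simp add: twist_def bt_def zero_grade_def)

lemma scaled_ubasis_in_Ocarrier: "x \<in> Zn (p + q) \<Longrightarrow> (\<lambda>z. c * ubasis x z) \<in> Ocarrier p q"
  by (auto simp: Ocarrier_def ubasis_def)

lemma sum_sum_delta:
  fixes v :: "'a \<Rightarrow> 'b \<Rightarrow> 'c::comm_monoid_add"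
  assumes "finite A" "finite B"
  shows "(\<Sum>a\<in>A. \<Sum>b\<in>B. if a = a0 then if b = b0 then v a b else 0 else 0) =
    (if a0 \<in> A \<and> b0 \<in> B then v a0 b0 else 0)"
proof -
  have "(\<Sum>a\<in>A. \<Sum>b\<in>B. if a = a0 then if b = b0 then v a b else 0 else 0) =
      (\<Sum>a\<in>A. if a = a0 then (\<Sum>b\<in>B. if b = b0 then v a b else 0) else 0)"
    by (intro sum.cong) auto
  with assms show ?thesis by simp
qed

lemma Omult_scaled_ubasis:
  assumes "x \<in> Zn (p + q)" "y \<in> Zn (p + q)"
  shows "Omult p q (\<lambda>z. c * ubasis x z) (\<lambda>z. d * ubasis y z) =
    (\<lambda>z. if z = zadd x y then (-1) ^ twist p q x y * c * d else 0)"
proof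
  fix z
  have "Omult p q (\<lambda>z. c * ubasis x z) (\<lambda>z. d * ubasis y z) z =
      (\<Sum>x'\<in>Zn (p + q). \<Sum>y'\<in>Zn (p + q). if x' = x then if y' = y then
        (if zadd x y = z then (-1) ^ twist p q x y * c * d else 0) else 0 else 0)"
    unfolding Omult_def ubasis_def by (intro sum.cong refl) auto
  then show "Omult p q (\<lambda>z. c * ubasis x z) (\<lambda>z. d * ubasis y z) z =
      (if z = zadd x y then (-1) ^ twist p q x y * c * d else 0)"
    using assms by (simp add: sum_sum_delta finite_Zn)
qed

lemma Omult_unit_left:
  assumes "a \<in> Ocarrier p q"
  shows "Omult p q (ubasis zero_grade) a = a"
proof
  fix z
  have "Omult p q (ubasis zero_grade) a z =
      (\<Sum>x\<in>Zn (p + q). \<Sum>y\<in>Zn (p + q). if x = zero_grade then if y = z then a y else 0 else 0)"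
    unfolding Omult_def ubasis_def
    by (intro sum.cong refl)
      (auto simp: twist_zero_grade_left[unfolded zero_grade_def] zadd_def zero_grade_def)
  with assms show "Omult p q (ubasis zero_grade) a z = a z"
    by (simp add: sum_sum_delta finite_Zn zero_grade_in_Zn Ocarrier_def)
qed

lemma Omult_unit_right:
  assumes "a \<in> Ocarrier p q"
  shows "Omult p q a (ubasis zero_grade) = a"
proof
  fix z
  have "Omult p q a (ubasis zero_grade) z =
      (\<Sum>x\<in>Zn (p + q). \<Sum>y\<in>Zn (p + q). if x = z then if y = zero_grade then a x else 0 else 0)"
    unfolding Omult_def ubasis_def
    by (intro sum.cong refl)
      (auto simp: twist_zero_grade_right[unfolded zero_grade_def] zadd_def zero_grade_def)
  with assms show "Omult p q a (ubasis zero_grade) z = a z"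
    by (simp add: sum_sum_delta finite_Zn zero_grade_in_Zn Ocarrier_def)
qed

lemma minus_one_power_eq_times_square:
  assumes "(-1::real) ^ t = (-1) ^ t' * c * c"
  shows "c \<noteq> 0 \<and> (even t \<longleftrightarrow> even t')"
  using assms zero_le_square[of c] by (cases "even t"; cases "even t'") auto

lemma graded_iso_unit:
  assumes "graded_iso p q p' q' \<phi>"
  shows "\<phi> (ubasis zero_grade) = ubasis zero_grade"
proof -
  let ?e = "ubasis zero_grade"
  have bij: "bij_betw \<phi> (Ocarrier p q) (Ocarrier p' q')"
    and mult: "\<And>a b. a \<in> Ocarrier p q \<Longrightarrow> b \<in> Ocarrier p q \<Longrightarrow>
      \<phi> (Omult p q a b) = Omult p' q' (\<phi> a) (\<phi> b)"
    using assms by (simp_all add: graded_iso_def)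
  have e_in: "?e \<in> Ocarrier p q" "?e \<in> Ocarrier p' q'"
    using scaled_ubasis_in_Ocarrier[where c = 1] zero_grade_in_Zn by simp_all
  then obtain a where a: "a \<in> Ocarrier p q" "\<phi> a = ?e"
    using bij by (metis bij_betw_iff_bijections)
  have "?e = \<phi> (Omult p q ?e a)" using Omult_unit_left a by simp
  also have "\<dots> = Omult p' q' (\<phi> ?e) ?e" using mult e_in a by simp
  also have "\<dots> = \<phi> ?e" using Omult_unit_right bij_betwE[OF bij] e_in by simp
  finally show ?thesis by simp
qed

lemma graded_iso_ubasis:
  assumes iso: "graded_iso p q p' q' \<phi>" and x: "x \<in> Zn (p + q)"
  obtains y c where "y \<in> Zn (p' + q')" "c \<noteq> 0" "\<phi> (ubasis x) = (\<lambda>z. c * ubasis y z)"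
    "odd (twist p q x x) \<longleftrightarrow> odd (twist p' q' y y)"
proof -
  let ?e = "ubasis zero_grade"
  have ux: "ubasis x \<in> Ocarrier p q"
    using scaled_ubasis_in_Ocarrier[where c = 1] x by simp
  moreover have "homogeneous p q (ubasis x)"
    using x unfolding homogeneous_def by (intro bexI[of _ x] exI[of _ 1]) simp_all
  ultimately have "homogeneous p' q' (\<phi> (ubasis x))"
    using iso unfolding graded_iso_def by blast
  then obtain y c where y: "y \<in> Zn (p' + q')" and \<phi>x: "\<phi> (ubasis x) = (\<lambda>z. c * ubasis y z)"
    unfolding homogeneous_def by blast
  have "Omult p q (ubasis x) (ubasis x) = (\<lambda>z. (-1) ^ twist p q x x * ?e z)"
    using Omult_scaled_ubasis[OF x x, where c = 1 and d = 1]
    by (auto simp: zadd_self ubasis_def)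
  then have "\<phi> (Omult p q (ubasis x) (ubasis x)) = (\<lambda>z. (-1) ^ twist p q x x * ?e z)"
    using iso graded_iso_unit[OF iso] scaled_ubasis_in_Ocarrier[where c = 1] zero_grade_in_Zn
    unfolding graded_iso_def by simp
  moreover have "\<phi> (Omult p q (ubasis x) (ubasis x)) =
      (\<lambda>z. if z = zero_grade then (-1) ^ twist p' q' y y * c * c else 0)"
    using iso ux \<phi>x Omult_scaled_ubasis[OF y y] unfolding graded_iso_def by (simp add: zadd_self)
  ultimately have squares: "(\<lambda>z. (-1) ^ twist p q x x * ?e z) =
      (\<lambda>z. if z = zero_grade then (-1) ^ twist p' q' y y * c * c else 0)"
    by simp
  have "(-1::real) ^ twist p q x x = (-1) ^ twist p' q' y y * c * c"
    using fun_cong[OF squares, of zero_grade] by (simp add: ubasis_def)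
  with y \<phi>x show ?thesis
    using minus_one_power_eq_times_square that by blast
qed

definition neg_square_grades :: "nat \<Rightarrow> nat \<Rightarrow> (nat \<Rightarrow> bool) set" where
  "neg_square_grades p q = {x \<in> Zn (p + q). odd (twist p q x x)}"

lemma graded_iso_card_neg_square_grades:
  assumes iso: "graded_iso p q p' q' \<phi>"
  shows "card (neg_square_grades p q) \<le> card (neg_square_grades p' q')"
proof -
  have "\<forall>x\<in>Zn (p + q). \<exists>y. y \<in> Zn (p' + q') \<and> (\<exists>c. c \<noteq> 0 \<and>
      \<phi> (ubasis x) = (\<lambda>z. c * ubasis y z) \<and> (odd (twist p q x x) \<longleftrightarrow> odd (twist p' q' y y)))"
    by (metis graded_iso_ubasis[OF iso])
  then obtain \<sigma> where \<sigma>: "\<And>x. x \<in> Zn (p + q) \<Longrightarrow> \<sigma> x \<in> Zn (p' + q') \<and> (\<exists>c. c \<noteq> 0 \<and>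
      \<phi> (ubasis x) = (\<lambda>z. c * ubasis (\<sigma> x) z) \<and>
      (odd (twist p q x x) \<longleftrightarrow> odd (twist p' q' (\<sigma> x) (\<sigma> x))))"
    by metis
  have "inj_on \<sigma> (Zn (p + q))"
  proof
    fix x x' assume x: "x \<in> Zn (p + q)" and x': "x' \<in> Zn (p + q)" and "\<sigma> x = \<sigma> x'"
    with \<sigma> obtain c c' where "c' \<noteq> 0"
      and \<phi>x: "\<phi> (ubasis x) = (\<lambda>z. c * ubasis (\<sigma> x) z)"
      and \<phi>x': "\<phi> (ubasis x') = (\<lambda>z. c' * ubasis (\<sigma> x) z)"
      by metis
    have in_C: "(\<lambda>z. c' * ubasis x z) \<in> Ocarrier p q" "(\<lambda>z. c * ubasis x' z) \<in> Ocarrier p q"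
      "ubasis x \<in> Ocarrier p q" "ubasis x' \<in> Ocarrier p q"
      using scaled_ubasis_in_Ocarrier x x' scaled_ubasis_in_Ocarrier[where c = 1] by simp_all
    then have "\<phi> (\<lambda>z. c' * ubasis x z) = \<phi> (\<lambda>z. c * ubasis x' z)"
      using iso \<phi>x \<phi>x' unfolding graded_iso_def by (simp add: mult_ac)
    then have "(\<lambda>z. c' * ubasis x z) = (\<lambda>z. c * ubasis x' z)"
      using iso in_C unfolding graded_iso_def bij_betw_def inj_on_def by blast
    then have "c' * ubasis x x = c * ubasis x' x" by metis
    with \<open>c' \<noteq> 0\<close> show "x = x'" by (auto simp: ubasis_def split: if_splits)
  qed
  moreover have "\<sigma> ` neg_square_grades p q \<subseteq> neg_square_grades p' q'"
    using \<sigma> by (auto simp: neg_square_grades_def)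
  ultimately show ?thesis
    by (intro card_inj_on_le) (auto simp: neg_square_grades_def finite_Zn elim: inj_on_subset)
qed

definition flip_first :: "(nat \<Rightarrow> bool) \<Rightarrow> nat \<Rightarrow> bool" where
  "flip_first x = x(0 := \<not> x 0)"

lemma odd_weight_flip_first:
  assumes "0 < n"
  shows "odd (weight (flip_first x) n) \<longleftrightarrow> even (weight x n)"
proof -
  obtain m where n: "n = Suc m" using assms gr0_implies_Suc by blast
  have "weight y n = bt y 0 + (\<Sum>i<m. bt y (Suc i))" for y
    unfolding weight_def n by (rule sum.lessThan_Suc_shift)
  then show ?thesis by (simp add: flip_first_def bt_def)
qed

lemma card_even_weight_eq_card_odd_weight:
  assumes "0 < n"
  shows "card {x \<in> Zn n. even (weight x n)} = card {x \<in> Zn n. odd (weight x n)}"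
proof (rule bij_betw_same_card[of flip_first], rule bij_betw_byWitness[where f' = flip_first])
  have "flip_first (flip_first x) = x" for x by (auto simp: flip_first_def)
  moreover have "flip_first x \<in> Zn n \<longleftrightarrow> x \<in> Zn n" for x
    using assms by (auto simp: flip_first_def Zn_def)
  ultimately show "\<forall>x\<in>{x \<in> Zn n. even (weight x n)}. flip_first (flip_first x) = x"
    "\<forall>y\<in>{x \<in> Zn n. odd (weight x n)}. flip_first (flip_first y) = y"
    "flip_first ` {x \<in> Zn n. even (weight x n)} \<subseteq> {x \<in> Zn n. odd (weight x n)}"
    "flip_first ` {x \<in> Zn n. odd (weight x n)} \<subseteq> {x \<in> Zn n. even (weight x n)}"
    using odd_weight_flip_first[OF assms] by auto
qed

theorem mainTheorem11:
  fixes n :: nat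
  assumes "n \<ge> 3"
  shows "\<not> (\<exists>\<phi>. graded_iso 0 n n 0 \<phi>)"
proof
  assume "\<exists>\<phi>. graded_iso 0 n n 0 \<phi>"
  then have iso_bound: "card (neg_square_grades 0 n) \<le> card (neg_square_grades n 0)"
    using graded_iso_card_neg_square_grades by blast
  define Ev where "Ev = {x \<in> Zn n. even (weight x n)}"
  define Od where "Od = {x \<in> Zn n. odd (weight x n)}"
  have fin: "finite Ev" "finite (neg_square_grades 0 n)"
    by (simp_all add: Ev_def neg_square_grades_def finite_Zn)
  have "zero_grade \<in> Ev"
    by (simp add: Ev_def Zn_def weight_def bt_def zero_grade_def)
  have "card (neg_square_grades n 0) \<le> card (Ev - {zero_grade})"
    using twist_diag_parity(2) fin
    by (intro card_mono) (auto simp: Ev_def neg_square_grades_def twist_zero_grade_left)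
  also have "\<dots> < card Ev"
    using fin(1) \<open>zero_grade \<in> Ev\<close> by (rule card_Diff1_less)
  also have "\<dots> = card Od"
    using card_even_weight_eq_card_odd_weight assms by (simp add: Ev_def Od_def)
  also have "\<dots> \<le> card (neg_square_grades 0 n)"
    using twist_diag_parity(1) fin by (intro card_mono) (auto simp: Od_def neg_square_grades_def)
  finally show False
    using iso_bound by simp
qed

end
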